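(* Let $G=(P,t_2Q)$ be a pair of homogeneous polynomials in $(t_1,t_2)$ of degree $d$ with $P(1,0)\ne0$. Then the resultant of $F=F_{t_1,t_2}(G)/t_2^2$ is $$\mathrm{Res}(F)=4^{4d}[Q(1,1)-P(1,1)]^4P(0,1)^4P(1,0)^{-8}\mathrm{Res}(G)^{16}.$$ In particular, for a homogeneous lift $C$ of a marked point $c\in\mathbb{C}(t)\setminus\{0,1,t\}$ with $F_1=F_{t_1,t_2}(C)/\gcd(F_{t_1,t_2}(C))=(P_1,Q_1)$, $d=\deg F_1$, and $F_{n+1}=F_{t_1,t_2}(F_n)/t_2^2$, one has for all $n\ge1$ $$\mathrm{Res}(F_n)=4^{A_nd}\left(\frac{(P_1(1,1)-Q_1(1,1))P_1(0,1)}{P_1(1,0)^2}\right)^{A_n}\mathrm{Res}(F_1)^{4^{2(n-1)}},\qquad A_n=\frac{4^{2(n-1)}-4^{n-1}}{3}.$$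
   Context: $F_{t_1,t_2}(z,w)=\big((t_1w^2-t_2z^2)^2,\;4t_2zw(w-z)(t_1w-t_2z)\big)$; for a pair of homogeneous polynomials $H=(H_1,H_2)$ in $(t_1,t_2)$, $F_{t_1,t_2}(H)$ means substituting $(z,w)=(H_1,H_2)$. $\mathrm{Res}$ denotes the resultant (Sylvester determinant) of a pair of homogeneous polynomials of the same degree. A homogeneous lift of $c$ is a pair of coprime homogeneous polynomials $C=(c_1,c_2)$ of equal degree with $c(t)=c_1(t,1)/c_2(t,1)$; $\gcd$ denotes the gcd of the two coordinates. *)

theory Defs
  imports "Subresultants.Resultant_Prelim" "HOL-Computational_Algebra.Fraction_Field" "HOL-Computational_Algebra.Polynomial_Factorial" "HOL-Computational_Algebra.Field_as_Ring"
begin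

text \<open>Bivariate polynomials in (t1,t2) over the complex numbers are encoded as
  complex poly poly: the outer variable is t1, the inner (coefficient) variable is t2.
  So  coeff (coeff H i) j  is the coefficient of  t1^i * t2^j.\<close>

type_synonym bpoly = "complex poly poly"

definition T1 :: bpoly where "T1 = [:0, 1:]"
definition T2 :: bpoly where "T2 = [:[:0, 1:]:]"

definition is_hom :: "nat \<Rightarrow> bpoly \<Rightarrow> bool" where
  "is_hom d H \<longleftrightarrow> (\<forall>i j. coeff (coeff H i) j \<noteq> 0 \<longrightarrow> i + j = d)"

definition total_degree :: "bpoly \<Rightarrow> nat" where
  "total_degree H = Max ({i + j | i j. coeff (coeff H i) j \<noteq> 0} \<union> {0})"

definition eval2 :: "bpoly \<Rightarrow> complex \<Rightarrow> complex \<Rightarrow> complex" where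
  "eval2 H a b = poly (map_poly (\<lambda>c. poly c b) H) a"

definition hcoeffs :: "nat \<Rightarrow> bpoly \<Rightarrow> complex poly" where
  "hcoeffs d H = Poly (map (\<lambda>i. coeff (coeff H i) (d - i)) [0..<Suc d])"

definition hdeg :: "bpoly \<times> bpoly \<Rightarrow> nat" where
  "hdeg H = max (total_degree (fst H)) (total_degree (snd H))"

definition Res :: "bpoly \<times> bpoly \<Rightarrow> complex" where
  "Res H = resultant_sub (hdeg H) (hdeg H) (hcoeffs (hdeg H) (fst H)) (hcoeffs (hdeg H) (snd H))"

definition Fmap :: "bpoly \<times> bpoly \<Rightarrow> bpoly \<times> bpoly" where
  "Fmap H = (let z = fst H; w = snd H in
     ((T1 * w^2 - T2 * z^2)^2, 4 * T2 * z * w * (w - z) * (T1 * w - T2 * z)))"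

definition pair_div :: "bpoly \<times> bpoly \<Rightarrow> bpoly \<Rightarrow> bpoly \<times> bpoly" where
  "pair_div H g = (fst H div g, snd H div g)"

definition pair_gcd :: "bpoly \<times> bpoly \<Rightarrow> bpoly" where
  "pair_gcd H = gcd (fst H) (snd H)"

definition dehom :: "bpoly \<Rightarrow> complex poly" where
  "dehom H = map_poly (\<lambda>c. poly c 1) H"

definition is_hom_lift :: "complex poly fract \<Rightarrow> bpoly \<times> bpoly \<Rightarrow> bool" where
  "is_hom_lift c C \<longleftrightarrow> coprime (fst C) (snd C) \<and>
     (\<exists>e. is_hom e (fst C) \<and> is_hom e (snd C)) \<and>
     c = Fract (dehom (fst C)) (dehom (snd C))"

end

theory Submission
  imports Defs "HOL-Computational_Algebra.Fundamental_Theorem_Algebra" "Subresultants.Subresultant"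
begin

text \<open>Dehomogenizing at t2 = 1, the Sylvester resultant of a pair of forms (P, t2 Q) of degree d
  with a = P(1,0) \<noteq> 0 becomes a^d times the product of q = Q(x,1) over the roots of p = P(x,1).
  The first coordinate of F_{t1,t2}(P, t2 Q)/t2^2 dehomogenizes to g^2 with g = x q^2 - p^2, and on the
  roots of g its second coordinate equals -4 x q^2 (q - p)^2.  The products of x, q and q - p over
  the roots of g are read off from g(0) = -p(0)^2, from g = -p^2 modulo q, and from g = (x - 1) p^2
  modulo q - p, which gives the one-step formula.  The new pair is again of the form (P', t2 Q')
  with P'(1,0) = a^4, of degree 4d, and with the ratio (P(1,1) - Q(1,1)) P(0,1) / P(1,0)^2 raised to
  the fourth power, so iterating yields the exponent recursion A_{n+1} = 16 A_n + 4^n.  Finally,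
  for a coprime lift C the reduced pair F_{t1,t2}(C)/gcd has this form, because t2 divides the
  second coordinate of F_{t1,t2}(C) to a higher power than the first.\<close>

section \<open>Resultants as products over roots\<close>

definition root_resultant :: "complex poly \<Rightarrow> complex poly \<Rightarrow> complex" where
  "root_resultant p q = (\<Prod>a\<in>#proots p. poly q a)"

lemma poly_eq_lead_coeff_prod_proots:
  "poly q x = lead_coeff q * (\<Prod>a\<in>#proots q. x - a)" for q :: "complex poly"
proof -
  have "poly q x = poly (smult (lead_coeff q) (\<Prod>a\<in>#proots q. [:-a, 1:])) x"
    by (simp only: complex_poly_decompose_multiset)
  then show ?thesis
    by (simp add: poly_prod_mset multiset.map_comp o_def)
qed

lemma root_resultant_eq_prod_diff:
  "root_resultant p q = lead_coeff q ^ degree p * (\<Prod>a\<in>#proots p. \<Prod>b\<in>#proots q. a - b)"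
  unfolding root_resultant_def poly_eq_lead_coeff_prod_proots[of q]
  by (simp add: prod_mset.distrib size_proots_complex)

lemma root_resultant_swap:
  "lead_coeff p ^ degree q * root_resultant p q =
     (-1) ^ (degree p * degree q) * lead_coeff q ^ degree p * root_resultant q p"
proof -
  have "(\<Prod>b\<in>#proots q. \<Prod>a\<in>#proots p. b - a) =
        (\<Prod>b\<in>#proots q. (-1) ^ degree p * (\<Prod>a\<in>#proots p. a - b))"
  proof (intro arg_cong[where f=prod_mset] image_mset_cong)
    fix b
    have "(\<Prod>a\<in>#proots p. b - a) = (\<Prod>a\<in>#proots p. (-1) * (a - b))"
      by simp
    then show "(\<Prod>a\<in>#proots p. b - a) = (-1) ^ degree p * (\<Prod>a\<in>#proots p. a - b)"
      by (simp only: prod_mset.distrib prod_mset_constant size_proots_complex)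
  qed
  also have "\<dots> = (-1) ^ (degree p * degree q) * (\<Prod>a\<in>#proots p. \<Prod>b\<in>#proots q. a - b)"
    by (simp add: prod_mset.distrib size_proots_complex prod_mset.swap[of _ "proots q"] power_mult)
  finally show ?thesis
    unfolding root_resultant_eq_prod_diff[of p q] root_resultant_eq_prod_diff[of q p]
    by (simp add: algebra_simps power_mult_distrib flip: power_mult)
qed

lemma root_resultant_cong:
  assumes "\<And>x. poly g x = 0 \<Longrightarrow> poly h1 x = poly h2 x"
  shows "root_resultant g h1 = root_resultant g h2"
  unfolding root_resultant_def
  by (intro arg_cong[where f=prod_mset] image_mset_cong) (use assms in \<open>cases "g = 0"; auto\<close>)

lemma root_resultant_mod: "root_resultant g (f mod g) = root_resultant g f"
proof (rule root_resultant_cong)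
  fix x assume "poly g x = 0"
  then show "poly (f mod g) x = poly f x"
    by (metis add.commute add_0 div_mult_mod_eq mult_zero_right poly_add poly_mult)
qed

lemma resultant_mod:
  fixes F G :: "'a::field poly"
  assumes "0 < degree G" and "degree G \<le> degree F"
  shows "resultant F G =
    (-1) ^ (degree F * degree G) * lead_coeff G ^ (degree F - degree (F mod G)) * resultant G (F mod G)"
proof -
  define H where "H = F mod G"
  have G0: "G \<noteq> 0"
    using assms(1) by auto
  have FGH: "F + (- (F div G)) * G = H"
    unfolding H_def by (simp add: minus_div_mult_eq_mod[symmetric])
  have dH: "degree H < degree G"
    using degree_mod_less[OF G0, of F] assms(1) unfolding H_def by auto
  show ?thesis
  proof (cases "degree H = 0")
    case True
    then obtain h where h: "H = [:h:]"
      by (rule degree_eq_zeroE)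
    have "subresultant 0 F G = smult ((-1) ^ (degree F * degree G) *
        lead_coeff G ^ degree F * h ^ (degree G - 1)) H"
      using BT_lemma_1_13[OF FGH assms(2)] dH True h by simp
    then have "resultant F G = (-1) ^ (degree F * degree G) * lead_coeff G ^ degree F *
        (h ^ (degree G - 1) * h)"
      using h by (simp add: subresultant_resultant mult.assoc)
    also have "h ^ (degree G - 1) * h = resultant G H"
      using assms(1) h by (simp add: power_Suc2[symmetric])
    finally show ?thesis
      using True unfolding H_def by simp
  next
    case False
    have "subresultant 0 F G =
        smult ((-1) ^ (degree F * degree G) * lead_coeff G ^ (degree F - degree H)) (subresultant 0 G H)"
      using BT_lemma_1_12[OF FGH assms(2)] dH False by simp
    then show ?thesis
      unfolding H_def by (simp add: subresultant_resultant)
  qed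
qed

lemma resultant_eq_root_resultant:
  assumes "p \<noteq> 0"
  shows "resultant p q = lead_coeff p ^ degree q * root_resultant p q"
  using assms
proof (induction "degree p + degree q" arbitrary: p q rule: less_induct)
  case less
  have reduce: "resultant F G = (-1) ^ (degree F * degree G) * lead_coeff G ^ degree F * root_resultant G F"
    if "degree F + degree G = degree p + degree q" "0 < degree G" "degree G \<le> degree F" for F G
  proof -
    have G0: "G \<noteq> 0"
      using that(2) by auto
    then have dH: "degree (F mod G) < degree G"
      using that(2) degree_mod_less[of G F] by (metis degree_0)
    with G0 have "resultant G (F mod G) = lead_coeff G ^ degree (F mod G) * root_resultant G F"
      using that less.hyps[of G "F mod G"] by (simp add: root_resultant_mod)
    then show ?thesis
      using resultant_mod[OF that(2,3)] dH that(3)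
      by (simp add: mult.assoc power_add[symmetric])
  qed
  consider "degree q = 0" | "degree p = 0" | "0 < degree q" "degree q \<le> degree p"
    | "0 < degree p" "degree p < degree q"
    by linarith
  then show ?case
  proof cases
    case 1
    then obtain c where "q = [:c:]"
      by (rule degree_eq_zeroE)
    then show ?thesis
      by (simp add: root_resultant_def size_proots_complex)
  next
    case 2
    then obtain c where "p = [:c:]"
      by (rule degree_eq_zeroE)
    then show ?thesis
      by (simp add: root_resultant_def)
  next
    case 3
    with reduce[of p q] show ?thesis
      using root_resultant_swap[of p q] by simp
  next
    case 4
    have "resultant p q = (-1) ^ (degree p * degree q) * resultant q p"
      by (rule resultant_swap)
    also have "\<dots> = ((-1) * (-1)) ^ (degree p * degree q) * lead_coeff p ^ degree q * root_resultant p q"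
      using reduce[of q p] 4 by (simp add: add.commute mult.commute power_mult_distrib)
    finally show ?thesis
      by simp
  qed
qed

lemma resultant_sub_reduce_right:
  fixes p q :: "'a::comm_ring_1 poly"
  assumes dq: "degree q < n"
  shows "resultant_sub m n p q = coeff p m * resultant_sub m (n - 1) p q"
proof -
  let ?S = "sylvester_mat_sub m n p q"
  have n0: "n > 0"
    using dq by auto
  then obtain k where k: "m + n = Suc k"
    by (cases n) auto
  have "det ?S = (\<Sum>i<m+n. ?S $$ (i,0) * cofactor ?S i 0)"
    by (rule laplace_expansion_column[OF sylvester_mat_sub_carrier]) (use n0 in auto)
  also have "\<dots> = ?S $$ (0,0) * cofactor ?S 0 0 + (\<Sum>i<k. ?S $$ (Suc i,0) * cofactor ?S (Suc i) 0)"
    unfolding k by (rule sum.lessThan_Suc_shift)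
  also have "(\<Sum>i<k. ?S $$ (Suc i,0) * cofactor ?S (Suc i) 0) = 0"
  proof (rule sum.neutral, intro ballI)
    fix i assume "i \<in> {..<k}"
    then have "?S $$ (Suc i, 0) = 0"
      using k dq by (subst sylvester_mat_sub_index) (auto intro: coeff_eq_0)
    then show "?S $$ (Suc i,0) * cofactor ?S (Suc i) 0 = 0"
      by simp
  qed
  also have "?S $$ (0,0) = coeff p m"
    using n0 by (subst sylvester_mat_sub_index) auto
  also have "cofactor ?S 0 0 = det (mat_delete ?S 0 0)"
    unfolding cofactor_def by simp
  also have "mat_delete ?S 0 0 = sylvester_mat_sub m (n - 1) p q"
  proof (rule eq_matI)
    fix i j assume i: "i < dim_row (sylvester_mat_sub m (n - 1) p q)"
      and j: "j < dim_col (sylvester_mat_sub m (n - 1) p q)"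
    have "mat_delete ?S 0 0 $$ (i,j) = ?S $$ (Suc i, Suc j)"
      unfolding mat_delete_def using i j n0 by auto
    also have "\<dots> = sylvester_mat_sub m (n - 1) p q $$ (i,j)"
      using i j n0 dq
      by (subst sylvester_mat_sub_index, simp, simp, subst sylvester_mat_sub_index, simp, simp)
         (auto intro!: coeff_eq_0)
    finally show "mat_delete ?S 0 0 $$ (i,j) = sylvester_mat_sub m (n - 1) p q $$ (i,j)" .
  qed (use n0 in auto)
  finally show ?thesis
    unfolding resultant_sub_def by simp
qed

lemma resultant_sub_right_degree:
  fixes p q :: "'a::comm_ring_1 poly"
  assumes "degree q \<le> n"
  shows "resultant_sub m n p q = coeff p m ^ (n - degree q) * resultant_sub m (degree q) p q"
  using assms
proof (induction n)
  case (Suc n)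
  then show ?case
    using resultant_sub_reduce_right[of q "Suc n" m p]
    by (cases "degree q = Suc n") (simp_all add: Suc_diff_le)
qed simp

lemma resultant_sub_eq_root_resultant:
  assumes "p \<noteq> 0" and "degree q \<le> n"
  shows "resultant_sub (degree p) n p q = lead_coeff p ^ n * root_resultant p q"
  using resultant_sub_right_degree[OF assms(2), of "degree p" p] resultant_eq_root_resultant[OF assms(1), of q]
    assms(2)
  by (simp add: resultant_sub mult.assoc power_add[symmetric])

lemma root_resultant_mult: "root_resultant g (a * b) = root_resultant g a * root_resultant g b"
  by (simp add: root_resultant_def prod_mset.distrib)

lemma root_resultant_const: "root_resultant g [:c:] = c ^ degree g"
  by (simp add: root_resultant_def size_proots_complex)

lemma root_resultant_smult: "root_resultant g (smult c h) = c ^ degree g * root_resultant g h"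
  by (simp add: root_resultant_def prod_mset.distrib size_proots_complex)

lemma root_resultant_power: "root_resultant g (h ^ n) = root_resultant g h ^ n"
  by (induction n) (simp_all add: root_resultant_mult root_resultant_def[of g 1])

lemma root_resultant_uminus: "root_resultant g (- h) = (-1) ^ degree g * root_resultant g h"
  using root_resultant_smult[of g "-1" h] by simp

lemma root_resultant_power_left: "root_resultant (g ^ n) h = root_resultant g h ^ n"
  unfolding root_resultant_def proots_power by (induction n) simp_all

lemma poly_eq_root_resultant_linear:
  "poly g c = lead_coeff g * (-1) ^ degree g * root_resultant g [:-c, 1:]"
proof -
  have "(\<Prod>a\<in>#proots g. c - a) = (\<Prod>a\<in>#proots g. (-1) * (a - c))"
    by simp
  also have "\<dots> = (-1) ^ degree g * root_resultant g [:-c, 1:]"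
    by (simp only: prod_mset.distrib prod_mset_constant size_proots_complex)
       (simp add: root_resultant_def)
  finally show ?thesis
    using poly_eq_lead_coeff_prod_proots[of g c] by simp
qed

section \<open>The dehomogenized step\<close>

text \<open>Here p and q are P(x,1) and Q(x,1), and g^2 is the dehomogenization of the first coordinate
  of F_{t1,t2}(P, t2 Q)/t2^2.\<close>

context
  fixes p q g :: "complex poly"
  assumes p0: "p \<noteq> 0" and q_small: "q = 0 \<or> degree q < degree p"
  defines "g \<equiv> [:0,1:] * q^2 - p^2"
begin

lemma degree_X_mult_square_diff: "degree g = 2 * degree p"
  and lead_coeff_X_mult_square_diff: "lead_coeff g = - (lead_coeff p ^ 2)"
  unfolding g_def
proof (atomize (full), cases "q = 0")
  case False
  then have "degree ([:0,1:] * q^2) < degree (- (p^2))"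
    using q_small p0 by (simp add: degree_mult_eq degree_power_eq)
  then show "degree ([:0,1:] * q^2 - p^2) = 2 * degree p \<and>
      lead_coeff ([:0,1:] * q^2 - p^2) = - (lead_coeff p ^ 2)"
    using degree_add_eq_right lead_coeff_add_le p0
    by (fastforce simp: degree_power_eq lead_coeff_power)
qed (use lead_coeff_power[of p 2] in \<open>simp add: degree_power_eq[OF p0]\<close>)

lemma root_resultant_X_mult_square_diff_X:
  "root_resultant g [:0,1:] = poly p 0 ^ 2 / lead_coeff p ^ 2"
proof -
  have "- (poly p 0 ^ 2) = poly g 0"
    by (simp add: g_def)
  also have "\<dots> = - (lead_coeff p ^ 2) * root_resultant g [:0,1:]"
    using poly_eq_root_resultant_linear[of g 0]
    unfolding lead_coeff_X_mult_square_diff unfolding degree_X_mult_square_diff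
    by (simp add: power_mult)
  finally show ?thesis
    using p0 by (simp add: field_simps)
qed

lemma root_resultant_X_mult_square_diff_small:
  "root_resultant g q = root_resultant p q ^ 2"
proof (cases "q = 0")
  case True
  then show ?thesis
    using root_resultant_const[of _ 0] degree_X_mult_square_diff
    by (simp add: power_0_left)
next
  case False
  define a where "a = lead_coeff p"
  define d where "d = degree p"
  define e where "e = degree q"
  have "root_resultant q g = root_resultant q (- (p^2))"
    by (rule root_resultant_cong) (simp add: g_def)
  then have Rqg: "root_resultant q g = (-1) ^ e * root_resultant q p ^ 2"
    by (simp add: root_resultant_uminus root_resultant_power e_def)
  have "(-1) ^ e * a ^ (2 * e) * root_resultant g q = lead_coeff g ^ e * root_resultant g q"
    unfolding lead_coeff_X_mult_square_diff a_def by (simp add: power_mult power_minus[of "lead_coeff p ^ 2"])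
  also have "\<dots> = (-1) ^ e * ((-1) ^ (d * e) * lead_coeff q ^ d * root_resultant q p) ^ 2"
    using root_resultant_swap[of g q] Rqg unfolding degree_X_mult_square_diff
    by (simp add: d_def e_def power_mult_distrib mult_ac flip: power_mult)
  also have "\<dots> = (-1) ^ e * (a ^ e * root_resultant p q) ^ 2"
    using root_resultant_swap[of p q] by (simp add: a_def d_def e_def)
  also have "\<dots> = (-1) ^ e * a ^ (2 * e) * root_resultant p q ^ 2"
    by (simp add: power_mult_distrib power_mult mult_ac)
  finally show ?thesis
    using p0 by (simp add: a_def power_minus[of "lead_coeff p ^ 2"])
qed

lemma degree_small_diff: "degree (q - p) = degree p"
  and lead_coeff_small_diff: "lead_coeff (q - p) = - lead_coeff p"
  using q_small degree_add_eq_right[of q "- p"] lead_coeff_add_le[of q "- p"] by auto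

lemma root_resultant_small_diff_left: "root_resultant (q - p) p = root_resultant p q"
proof -
  define a where "a = lead_coeff p"
  define d where "d = degree p"
  have "root_resultant p (q - p) = root_resultant p q"
    by (rule root_resultant_cong) simp
  then have "a ^ d * root_resultant p q = (-1) ^ (d * d) * (- a) ^ d * root_resultant (q - p) p"
    using root_resultant_swap[of p "q - p"] unfolding lead_coeff_small_diff unfolding degree_small_diff
    by (simp add: a_def d_def)
  also have "(-1) ^ (d * d) * (- a) ^ d = (-1) ^ (d * d + d) * a ^ d"
    by (simp add: power_minus[of a] power_add)
  also have "(-1::complex) ^ (d * d + d) = 1"
    by (rule neg_one_even_power) simp
  finally show ?thesis
    using p0 by (simp add: a_def)
qed

lemma root_resultant_X_mult_square_diff_diff:
  "root_resultant g (q - p) = (poly p 1 - poly q 1) * root_resultant p q ^ 2 / lead_coeff p"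
proof -
  define r where "r = q - p"
  define a where "a = lead_coeff p"
  define d where "d = degree p"
  have a0: "a \<noteq> 0"
    using p0 by (simp add: a_def)
  have dr: "degree r = d" and lr: "lead_coeff r = - a"
    unfolding r_def d_def a_def by (fact degree_small_diff lead_coeff_small_diff)+
  have "root_resultant r g = root_resultant r ([:-1,1:] * p^2)"
    by (rule root_resultant_cong) (simp add: g_def r_def algebra_simps)
  then have Rrg: "root_resultant r g = root_resultant r [:-1,1:] * root_resultant p q ^ 2"
    by (simp only: root_resultant_mult root_resultant_power r_def root_resultant_small_diff_left)
  have Rr1: "root_resultant r [:-1,1:] = (-1) ^ d * poly r 1 / (- a)"
    using poly_eq_root_resultant_linear[of r 1] a0 unfolding lr unfolding dr
    by (simp add: field_simps)
  have "(- (a^2)) ^ d * root_resultant g r = (-1) ^ (2 * d * d) * (- a) ^ (2 * d) * root_resultant r g"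
    using root_resultant_swap[of g r]
    unfolding lr lead_coeff_X_mult_square_diff unfolding dr degree_X_mult_square_diff
    by (simp add: a_def d_def)
  moreover have "(- (a^2)) ^ d = a ^ (2 * d) * (-1) ^ d" and "(-1::complex) ^ (2 * d * d) = 1"
    and "(- a) ^ (2 * d) = a ^ (2 * d)"
    by (simp_all add: power_minus[of "a^2"] power_mult)
  ultimately have "a ^ (2 * d) * ((-1) ^ d * root_resultant g r) = a ^ (2 * d) * root_resultant r g"
    by (simp add: mult_ac)
  then have Rgr: "(-1) ^ d * root_resultant g r = root_resultant r g"
    using a0 by simp
  have "root_resultant g r = ((-1) ^ d * (-1) ^ d) * root_resultant g r"
    by (simp flip: power_add)
  also have "\<dots> = (-1) ^ d * ((-1) ^ d * poly r 1 / (- a)) * root_resultant p q ^ 2"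
    by (simp only: mult.assoc Rgr Rrg Rr1)
  also have "\<dots> = ((-1) ^ d * (-1) ^ d) * (- poly r 1 * root_resultant p q ^ 2 / a)"
    by (simp add: field_simps)
  also have "(-1::complex) ^ d * (-1) ^ d = 1"
    by (simp flip: power_add)
  finally have "root_resultant g r = - poly r 1 * root_resultant p q ^ 2 / a"
    by simp
  then show ?thesis
    by (simp add: r_def a_def)
qed

lemma root_resultant_X_mult_square_diff_step:
  "root_resultant g (4 * p * q * (q - p) * ([:0,1:] * q - p)) =
     4 ^ (2 * degree p) * (poly q 1 - poly p 1) ^ 2 * poly p 0 ^ 2 / lead_coeff p ^ 4
     * root_resultant p q ^ 8"
proof -
  have "root_resultant g (4 * p * q * (q - p) * ([:0,1:] * q - p)) =
        root_resultant g (smult (-4) ([:0,1:] * q^2 * (q - p)^2))"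
  proof (rule root_resultant_cong)
    fix x assume "poly g x = 0"
    then have "x * poly q x ^ 2 - poly p x ^ 2 = 0"
      by (simp add: g_def)
    moreover have "poly (4 * p * q * (q - p) * ([:0,1:] * q - p)) x =
        -4 * x * poly q x ^ 2 * (poly q x - poly p x) ^ 2
        + 4 * poly q x * (poly q x - poly p x) * (x * poly q x ^ 2 - poly p x ^ 2)"
      by (simp add: algebra_simps power2_eq_square)
    ultimately show "poly (4 * p * q * (q - p) * ([:0,1:] * q - p)) x =
               poly (smult (-4) ([:0,1:] * q^2 * (q - p)^2)) x"
      by simp
  qed
  also have "\<dots> = (-4) ^ (2 * degree p) * root_resultant g [:0,1:] * root_resultant g q ^ 2
      * root_resultant g (q - p) ^ 2"
    unfolding root_resultant_smult root_resultant_mult root_resultant_power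
      degree_X_mult_square_diff by (simp only: mult.assoc)
  also have "\<dots> = 4 ^ (2 * degree p) * (poly p 0 ^ 2 / lead_coeff p ^ 2) * (root_resultant p q ^ 2) ^ 2
      * ((poly p 1 - poly q 1) * root_resultant p q ^ 2 / lead_coeff p) ^ 2"
    unfolding root_resultant_X_mult_square_diff_X root_resultant_X_mult_square_diff_small
      root_resultant_X_mult_square_diff_diff
    by (simp add: power_mult)
  also have "\<dots> = 4 ^ (2 * degree p) * (poly q 1 - poly p 1) ^ 2 * poly p 0 ^ 2 / lead_coeff p ^ 4
     * root_resultant p q ^ 8"
    by (simp add: power2_commute power_divide power_mult_distrib mult_ac flip: power_mult power_add)
  finally show ?thesis .
qed

end

section \<open>Binary forms\<close>

interpretation const_poly_hom: map_poly_comm_ring_hom "\<lambda>a::complex. [:a:]"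
  by unfold_locales (auto simp: one_pCons)
interpretation map_const_poly_hom: map_poly_comm_ring_hom "map_poly (\<lambda>a::complex. [:a:])" ..

text \<open>For an outer variable s and an inner variable u, graded_form H is H(s u, s): its
  coefficient of s^k is the homogeneous component of degree k of H, dehomogenized to u = t1/t2.\<close>

definition graded_form :: "bpoly \<Rightarrow> complex poly poly" where
  "graded_form H = poly (map_poly (map_poly (\<lambda>a::complex. [:a:])) H) [:0, [:0,1:]:]"

lemma graded_form_mult: "graded_form (A * B) = graded_form A * graded_form B"
  unfolding graded_form_def by (simp add: map_const_poly_hom.hom_mult)

lemma coeff_graded_form:
  "coeff (coeff (graded_form H) k) i = (if i \<le> k then coeff (coeff H i) (k - i) else 0)"
proof (induction H arbitrary: k i)
  case (pCons c H)
  have "graded_form (pCons c H) = map_poly (\<lambda>a. [:a:]) c + [:0, [:0,1:]:] * graded_form H"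
    unfolding graded_form_def by (simp add: const_poly_hom.map_poly_pCons_hom)
  then have "coeff (coeff (graded_form (pCons c H)) k) i =
      (if i = 0 then coeff c k else 0) +
      (if k = 0 \<or> i = 0 then 0 else coeff (coeff (graded_form H) (k - 1)) (i - 1))"
    by (cases k; cases i) (simp_all add: coeff_map_poly)
  then show ?case
    using pCons.IH by (cases i; cases k) auto
qed (simp add: graded_form_def)

lemma graded_form_eq_0_iff [simp]: "graded_form H = 0 \<longleftrightarrow> H = 0"
proof
  assume "graded_form H = 0"
  then have "coeff (coeff H i) j = 0" for i j
    using coeff_graded_form[of H "i + j" i] by simp
  then show "H = 0"
    by (simp add: poly_eq_iff)
qed (simp add: graded_form_def)

lemma is_hom_iff_graded_form: "is_hom d H \<longleftrightarrow> graded_form H = monom (coeff (graded_form H) d) d"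
proof -
  have "is_hom d H \<longleftrightarrow> (\<forall>k. k \<noteq> d \<longrightarrow> coeff (graded_form H) k = 0)"
    unfolding is_hom_def poly_eq_iff coeff_graded_form coeff_0
    by (metis add_diff_cancel_left' le_add1 le_add_diff_inverse)
  also have "\<dots> \<longleftrightarrow> graded_form H = monom (coeff (graded_form H) d) d"
    by (metis coeff_monom poly_eq_iff)
  finally show ?thesis .
qed

lemma is_hom_mult: "is_hom a A \<Longrightarrow> is_hom b B \<Longrightarrow> is_hom (a + b) (A * B)"
  unfolding is_hom_iff_graded_form graded_form_mult by (metis coeff_monom mult_monom)

lemma is_hom_diff: "is_hom d A \<Longrightarrow> is_hom d B \<Longrightarrow> is_hom d (A - B)"
  unfolding is_hom_def by (metis coeff_diff diff_zero)

lemma is_hom_uminus: "is_hom d A \<Longrightarrow> is_hom d (- A)"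
  unfolding is_hom_def by simp

lemma is_hom_0: "is_hom d 0"
  unfolding is_hom_def by simp

lemma is_hom_power: "is_hom a A \<Longrightarrow> is_hom (n * a) (A ^ n)"
proof (induction n)
  case 0
  then show ?case
    unfolding is_hom_def by (auto simp: coeff_1 split: if_splits)
next
  case (Suc n)
  then show ?case
    using is_hom_mult[of a A "n * a" "A ^ n"] by (simp add: add.commute)
qed

lemma is_hom_T1: "is_hom 1 T1"
  unfolding is_hom_def T1_def by (auto simp: coeff_pCons split: nat.splits)

lemma is_hom_T2: "is_hom 1 T2"
  unfolding is_hom_def T2_def by (auto simp: coeff_pCons split: nat.splits)

lemma is_hom_numeral: "is_hom 0 (numeral n)"
  unfolding is_hom_def by (auto simp: numeral_poly coeff_pCons split: nat.splits)

lemma is_hom_unique: "is_hom a H \<Longrightarrow> is_hom b H \<Longrightarrow> H \<noteq> 0 \<Longrightarrow> a = b"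
  unfolding is_hom_def by (metis leading_coeff_neq_0)

lemma mult_eq_monom_imp_monom:
  fixes P Q :: "'a::idom poly"
  assumes PQ: "P * Q = monom m c" and m: "m \<noteq> 0"
  shows "P = monom (lead_coeff P) (degree P)"
proof -
  have P0: "P \<noteq> 0" and Q0: "Q \<noteq> 0"
    using PQ m by auto
  have "degree P + degree Q = c"
    using PQ m P0 Q0 by (metis degree_monom_eq degree_mult_eq)
  moreover have "order 0 P + order 0 Q = c"
    using order_mult[of P Q 0] PQ m P0 Q0 by simp
  moreover have "order 0 P \<le> degree P" "order 0 Q \<le> degree Q"
    using P0 Q0 by (auto intro: order_degree)
  ultimately have "degree P \<le> order 0 P"
    by linarith
  then have "coeff P k = 0" if "k < degree P" for k
    using that monom_1_dvd_iff[OF P0, of "degree P"] monom_1_dvd_iff'[of "degree P" P] by auto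
  then show ?thesis
    by (intro poly_eqI) (metis coeff_eq_0 coeff_monom linorder_neqE_nat)
qed

lemma is_hom_factor:
  assumes "is_hom c (A * B)" and "A * B \<noteq> 0"
  obtains a where "a \<le> c" "is_hom a A" "is_hom (c - a) B"
proof -
  let ?m = "coeff (graded_form (A * B)) c"
  have AB: "graded_form A * graded_form B = monom ?m c"
    using assms(1) unfolding is_hom_iff_graded_form graded_form_mult by simp
  have "?m \<noteq> 0"
    using assms AB by (auto simp: is_hom_iff_graded_form)
  then have "graded_form A = monom (lead_coeff (graded_form A)) (degree (graded_form A))"
    and "graded_form B = monom (lead_coeff (graded_form B)) (degree (graded_form B))"
    using mult_eq_monom_imp_monom[OF AB] mult_eq_monom_imp_monom[of "graded_form B" "graded_form A"] AB
    by (simp_all add: mult.commute)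
  moreover have "degree (graded_form A) + degree (graded_form B) = c"
    using AB \<open>?m \<noteq> 0\<close> by (metis degree_monom_eq degree_mult_eq monom_eq_0_iff mult_eq_0_iff)
  ultimately show ?thesis
    by (intro that[of "degree (graded_form A)"]) (auto simp: is_hom_iff_graded_form)
qed

interpretation eval_poly_hom: map_poly_comm_ring_hom "\<lambda>p::complex poly. poly p a" for a ..

lemma dehom_mult: "dehom (A * B) = dehom A * dehom B"
  unfolding dehom_def by (simp add: eval_poly_hom.hom_mult)

lemma dehom_diff: "dehom (A - B) = dehom A - dehom B"
  unfolding dehom_def by (simp add: eval_poly_hom.hom_minus)

lemma dehom_power: "dehom (A ^ n) = dehom A ^ n"
  unfolding dehom_def by (simp add: eval_poly_hom.hom_power)

lemma dehom_numeral: "dehom (numeral n) = numeral n"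
  unfolding dehom_def by (simp add: eval_poly_hom.hom_numeral)

lemma dehom_T1: "dehom T1 = [:0,1:]"
  unfolding dehom_def T1_def by simp

lemma dehom_T2: "dehom T2 = 1"
  unfolding dehom_def T2_def by simp

lemmas dehom_simps = dehom_mult dehom_diff dehom_power dehom_numeral dehom_T1 dehom_T2

lemma eval2_eq_poly_dehom: "eval2 H x 1 = poly (dehom H) x"
  unfolding eval2_def dehom_def ..

lemma T2_dvd_iff: "T2 dvd H \<longleftrightarrow> map_poly (\<lambda>c. poly c 0) H = 0"
proof -
  have "T2 dvd H \<longleftrightarrow> (\<forall>n. [:0,1:] dvd coeff H n)"
    unfolding T2_def by (rule const_poly_dvd_iff)
  also have "\<dots> \<longleftrightarrow> (\<forall>n. poly (coeff H n) 0 = 0)"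
    by (simp add: dvd_iff_poly_eq_0[of 0, simplified])
  also have "\<dots> \<longleftrightarrow> map_poly (\<lambda>c. poly c 0) H = 0"
    by (simp add: poly_eq_iff coeff_map_poly)
  finally show ?thesis .
qed

lemma T2_neq_0 [simp]: "T2 \<noteq> 0"
  by (simp add: T2_def)

lemma prime_elem_T2: "prime_elem T2"
proof (rule prime_elemI)
  show "T2 \<noteq> 0" and "\<not> is_unit T2"
    by (simp_all add: T2_def T2_dvd_iff[of 1, unfolded T2_def])
  show "T2 dvd A \<or> T2 dvd B" if "T2 dvd A * B" for A B
    using that unfolding T2_dvd_iff by (simp add: eval_poly_hom.hom_mult)
qed

lemma coeff_is_hom:
  assumes "is_hom d H"
  shows "coeff H i = (if i \<le> d then monom (coeff (coeff H i) (d - i)) (d - i) else 0)"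
proof (intro poly_eqI)
  fix j
  have "coeff (coeff H i) j = 0" if "i + j \<noteq> d"
    using assms that unfolding is_hom_def by blast
  then show "coeff (coeff H i) j = coeff (if i \<le> d then monom (coeff (coeff H i) (d - i)) (d - i) else 0) j"
    by (cases "i \<le> d") (auto simp: coeff_monom)
qed

lemma coeff_dehom:
  assumes "is_hom d H"
  shows "coeff (dehom H) i = (if i \<le> d then coeff (coeff H i) (d - i) else 0)"
proof -
  have "coeff (dehom H) i = poly (coeff H i) 1"
    unfolding dehom_def by (simp add: coeff_map_poly)
  then show ?thesis
    by (subst (asm) coeff_is_hom[OF assms]) (simp add: poly_monom)
qed

lemma degree_dehom_le: "is_hom d H \<Longrightarrow> degree (dehom H) \<le> d"
  by (rule degree_le) (simp add: coeff_dehom)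

lemma hcoeffs_eq_dehom: "is_hom d H \<Longrightarrow> hcoeffs d H = dehom H"
  unfolding hcoeffs_def
  by (intro poly_eqI) (simp add: coeff_Poly nth_default_def coeff_dehom less_Suc_eq_le del: upt_Suc)

lemma map_poly_eval_0_is_hom:
  assumes "is_hom d H"
  shows "map_poly (\<lambda>c. poly c 0) H = monom (coeff (dehom H) d) d"
proof (intro poly_eqI)
  fix i
  have "coeff (coeff H i) 0 = 0" if "i \<noteq> d"
    using assms that unfolding is_hom_def by force
  then show "coeff (map_poly (\<lambda>c. poly c 0) H) i = coeff (monom (coeff (dehom H) d) d) i"
    by (simp add: coeff_map_poly coeff_monom coeff_dehom[OF assms] poly_0_coeff_0)
qed

lemma eval2_1_0: "is_hom d H \<Longrightarrow> eval2 H 1 0 = coeff (dehom H) d"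
  unfolding eval2_def by (simp add: map_poly_eval_0_is_hom poly_monom)

lemma T2_dvd_iff_eval2: "is_hom d H \<Longrightarrow> T2 dvd H \<longleftrightarrow> eval2 H 1 0 = 0"
  unfolding T2_dvd_iff by (simp add: map_poly_eval_0_is_hom eval2_1_0)

lemma total_degree_is_hom: "is_hom d H \<Longrightarrow> H \<noteq> 0 \<Longrightarrow> total_degree H = d"
proof -
  assume "is_hom d H" "H \<noteq> 0"
  then obtain i j where "coeff (coeff H i) j \<noteq> 0"
    by (metis leading_coeff_neq_0)
  with \<open>is_hom d H\<close> have "{i + j |i j. coeff (coeff H i) j \<noteq> 0} = {d}"
    unfolding is_hom_def by blast
  then show ?thesis
    unfolding total_degree_def by simp
qed

lemma hdeg_is_hom: "is_hom d A \<Longrightarrow> is_hom d B \<Longrightarrow> A \<noteq> 0 \<Longrightarrow> hdeg (A, B) = d"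
  unfolding hdeg_def using total_degree_is_hom[of d A] total_degree_is_hom[of d B]
  by (cases "B = 0") (simp_all add: total_degree_def)

lemma Res_is_hom:
  "is_hom d A \<Longrightarrow> is_hom d B \<Longrightarrow> A \<noteq> 0 \<Longrightarrow> Res (A, B) = resultant_sub d d (dehom A) (dehom B)"
  unfolding Res_def by (simp add: hdeg_is_hom hcoeffs_eq_dehom)

section \<open>One step of the map\<close>

interpretation eval2_hom: comm_ring_hom "\<lambda>H. eval2 H a b" for a b
  by unfold_locales (simp_all add: eval2_def eval_poly_hom.hom_add eval_poly_hom.hom_mult)

lemma eval2_T1: "eval2 T1 a b = a"
  and eval2_T2: "eval2 T2 a b = b"
  by (simp_all add: eval2_def T1_def T2_def)

lemmas eval2_simps = eval2_hom.hom_mult eval2_hom.hom_minus eval2_hom.hom_power eval2_hom.hom_numeral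
  eval2_T1 eval2_T2

lemma pair_div_Fmap_T2:
  "pair_div (Fmap (P, T2 * Q)) (T2^2) =
     ((T1 * T2 * Q^2 - P^2)^2, T2 * (4 * P * Q * (T2 * Q - P) * (T1 * Q - P)))"
proof -
  have "Fmap (P, T2 * Q) = (T2^2 * (T1 * T2 * Q^2 - P^2)^2,
      T2^2 * (T2 * (4 * P * Q * (T2 * Q - P) * (T1 * Q - P))))"
    unfolding Fmap_def by (simp add: algebra_simps power2_eq_square)
  then show ?thesis
    unfolding pair_div_def by simp
qed

lemma is_hom_T2_mult_cases:
  assumes "is_hom d (T2 * Q)" and "Q \<noteq> 0"
  obtains e where "d = Suc e" and "is_hom e Q"
proof -
  obtain a where "a \<le> d" "is_hom a T2" "is_hom (d - a) Q"
    using is_hom_factor[OF assms(1)] assms(2) by (auto simp: T2_def)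
  moreover have "a = 1"
    using is_hom_unique[OF \<open>is_hom a T2\<close> is_hom_T2] by (simp add: T2_def)
  ultimately show ?thesis
    using that[of "d - 1"] by auto
qed

context
  fixes d :: nat and P Q :: bpoly
  assumes hom_P: "is_hom d P" and hom_T2_Q: "is_hom d (T2 * Q)" and P_1_0: "eval2 P 1 0 \<noteq> 0"
begin

lemma is_hom_step_fst: "is_hom (4 * d) ((T1 * T2 * Q^2 - P^2)^2)"
proof -
  have "is_hom (2 * d) (T1 * T2 * Q^2)" if Q0: "Q \<noteq> 0"
  proof -
    obtain e where "d = Suc e" "is_hom e Q"
      using is_hom_T2_mult_cases[OF hom_T2_Q Q0] .
    then show ?thesis
      using is_hom_mult[OF is_hom_mult[OF is_hom_T1 is_hom_T2] is_hom_power[of e Q 2]] by simp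
  qed
  then have "is_hom (2 * d) (T1 * T2 * Q^2 - P^2)"
    using is_hom_power[OF hom_P, of 2] is_hom_diff is_hom_uminus by (cases "Q = 0") auto
  then show ?thesis
    using is_hom_power[of "2 * d" _ 2] by simp
qed

lemma is_hom_step_snd: "is_hom (4 * d) (T2 * (4 * P * Q * (T2 * Q - P) * (T1 * Q - P)))"
proof (cases "Q = 0")
  case False
  then obtain e where de: "d = Suc e" and hom_Q: "is_hom e Q"
    using is_hom_T2_mult_cases[OF hom_T2_Q] by blast
  have "is_hom d (T1 * Q)"
    using is_hom_mult[OF is_hom_T1 hom_Q] de by simp
  then have "is_hom d (T1 * Q - P)"
    using hom_P by (rule is_hom_diff)
  moreover have "is_hom d (T2 * Q - P)"
    using hom_T2_Q hom_P by (rule is_hom_diff)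
  ultimately have "is_hom (1 + (0 + d + e + d + d)) (T2 * (4 * P * Q * (T2 * Q - P) * (T1 * Q - P)))"
    by (intro is_hom_mult is_hom_T2 is_hom_numeral hom_P hom_Q)
  moreover have "1 + (0 + d + e + d + d) = 4 * d"
    using de by simp
  ultimately show ?thesis
    by metis
qed (simp add: is_hom_0)

lemma degree_dehom_fst: "degree (dehom P) = d"
  and lead_coeff_dehom_fst: "lead_coeff (dehom P) = eval2 P 1 0"
  and dehom_snd_small: "dehom Q = 0 \<or> degree (dehom Q) < degree (dehom P)"
  and degree_dehom_snd_le: "degree (dehom Q) \<le> d"
proof -
  show dP: "degree (dehom P) = d"
    using degree_dehom_le[OF hom_P] eval2_1_0[OF hom_P] P_1_0 by (metis le_antisym le_degree)
  then show "lead_coeff (dehom P) = eval2 P 1 0"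
    using eval2_1_0[OF hom_P] by simp
  have dQ: "dehom (T2 * Q) = dehom Q"
    by (simp add: dehom_simps)
  then show "degree (dehom Q) \<le> d"
    using degree_dehom_le[OF hom_T2_Q] by simp
  moreover have "coeff (dehom Q) d = 0"
    using eval2_1_0[OF hom_T2_Q] dQ by (simp add: eval2_simps)
  ultimately show "dehom Q = 0 \<or> degree (dehom Q) < degree (dehom P)"
    using dP by (metis le_neq_implies_less leading_coeff_0_iff)
qed

lemma Res_step:
  "Res ((T1 * T2 * Q^2 - P^2)^2, T2 * (4 * P * Q * (T2 * Q - P) * (T1 * Q - P))) =
     4 ^ (4 * d) * (eval2 Q 1 1 - eval2 P 1 1) ^ 4 * eval2 P 0 1 ^ 4 / eval2 P 1 0 ^ 8
     * Res (P, T2 * Q) ^ 16"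
proof -
  define p where "p = dehom P"
  define q where "q = dehom Q"
  define a where "a = eval2 P 1 0"
  define g where "g = [:0,1:] * q^2 - p^2"
  note dehom_facts = degree_dehom_fst lead_coeff_dehom_fst dehom_snd_small degree_dehom_snd_le
  have p0: "p \<noteq> 0" and q_small: "q = 0 \<or> degree q < degree p"
    using dehom_facts P_1_0 by (auto simp: p_def q_def)
  then have P0: "P \<noteq> 0"
    by (auto simp: p_def dehom_def)
  have lp: "lead_coeff p = a"
    unfolding p_def a_def by (rule lead_coeff_dehom_fst)
  have dg: "degree g = 2 * d"
    using degree_X_mult_square_diff[OF p0 q_small] degree_dehom_fst by (simp add: g_def p_def)
  have lg: "lead_coeff g = - (a^2)"
    using lead_coeff_X_mult_square_diff[OF p0 q_small, folded g_def, unfolded lp] .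
  then have g0: "g \<noteq> 0"
    using P_1_0 by (auto simp: a_def)
  then have dg2: "degree (g^2) = 4 * d"
    by (simp add: degree_power_eq dg)
  have lg2: "lead_coeff (g^2) = a^4"
    using lead_coeff_power[of g 2] lg by simp
  have "dehom ((T1 * T2 * Q^2 - P^2)^2) = g^2"
    by (simp add: g_def p_def q_def dehom_simps)
  then have "(T1 * T2 * Q^2 - P^2)^2 \<noteq> 0"
    using g0 by (auto simp: dehom_def)
  then have "Res ((T1 * T2 * Q^2 - P^2)^2, T2 * (4 * P * Q * (T2 * Q - P) * (T1 * Q - P))) =
      resultant_sub (degree (g^2)) (4 * d) (g^2) (4 * p * q * (q - p) * ([:0,1:] * q - p))"
    using Res_is_hom[OF is_hom_step_fst is_hom_step_snd] dg2
    by (simp add: g_def p_def q_def dehom_simps)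
  also have "\<dots> = (a^4) ^ (4 * d) * root_resultant g (4 * p * q * (q - p) * ([:0,1:] * q - p)) ^ 2"
  proof -
    have "dehom (T2 * (4 * P * Q * (T2 * Q - P) * (T1 * Q - P))) = 4 * p * q * (q - p) * ([:0,1:] * q - p)"
      by (simp add: p_def q_def dehom_simps)
    then have "degree (4 * p * q * (q - p) * ([:0,1:] * q - p)) \<le> 4 * d"
      using degree_dehom_le[OF is_hom_step_snd] by simp
    then show ?thesis
      using resultant_sub_eq_root_resultant[of "g^2" _ "4 * d"] g0 dg2 lg2
      by (simp add: root_resultant_power_left)
  qed
  also have "\<dots> = (a^4) ^ (4 * d) * (4 ^ (2 * d) * (poly q 1 - poly p 1) ^ 2 * poly p 0 ^ 2 / a ^ 4
      * root_resultant p q ^ 8) ^ 2"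
    using root_resultant_X_mult_square_diff_step[OF p0 q_small] dehom_facts
    by (simp add: g_def p_def a_def)
  also have "Res (P, T2 * Q) = a ^ d * root_resultant p q"
    using Res_is_hom[OF hom_P hom_T2_Q P0] resultant_sub_eq_root_resultant[OF p0] dehom_facts
    by (simp add: p_def q_def a_def dehom_simps)
  ultimately show ?thesis
    using P_1_0
    by (simp add: eval2_eq_poly_dehom p_def q_def a_def dehom_simps power_mult_distrib
        power_divide mult_ac flip: power_mult power_add)
qed

end

section \<open>Iteration\<close>

definition normal_pair :: "nat \<Rightarrow> bpoly \<times> bpoly \<Rightarrow> bool" where
  "normal_pair d H \<longleftrightarrow>
     (\<exists>P Q. H = (P, T2 * Q) \<and> is_hom d P \<and> is_hom d (T2 * Q) \<and> eval2 P 1 0 \<noteq> 0)"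

definition F_step :: "bpoly \<times> bpoly \<Rightarrow> bpoly \<times> bpoly" where
  "F_step H = pair_div (Fmap H) (T2^2)"

definition res_ratio :: "bpoly \<times> bpoly \<Rightarrow> complex" where
  "res_ratio H = (eval2 (fst H) 1 1 - eval2 (snd H) 1 1) * eval2 (fst H) 0 1 / eval2 (fst H) 1 0 ^ 2"

lemma hdeg_normal_pair: "normal_pair d H \<Longrightarrow> hdeg H = d"
  unfolding normal_pair_def by (metis eval2_def hdeg_is_hom map_poly_0 poly_0)

lemma normal_pair_F_step: "normal_pair d H \<Longrightarrow> normal_pair (4 * d) (F_step H)"
  unfolding normal_pair_def F_step_def
  by (auto simp: pair_div_Fmap_T2 is_hom_step_fst is_hom_step_snd eval2_simps)

lemma res_ratio_F_step: "res_ratio (F_step (P, T2 * Q)) = res_ratio (P, T2 * Q) ^ 4"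
proof -
  have "eval2 ((T1 * T2 * Q^2 - P^2)^2) 1 1 - eval2 (T2 * (4 * P * Q * (T2 * Q - P) * (T1 * Q - P))) 1 1
      = (eval2 P 1 1 - eval2 (T2 * Q) 1 1) ^ 4"
    unfolding eval2_simps by (simp add: algebra_simps power2_eq_square power4_eq_xxxx)
  then show ?thesis
    unfolding F_step_def pair_div_Fmap_T2 res_ratio_def fst_conv snd_conv
    by (simp add: eval2_simps power_divide power_mult_distrib flip: power_mult)
qed

lemma Res_F_step: "normal_pair d H \<Longrightarrow> Res (F_step H) = 4 ^ (4 * d) * res_ratio H ^ 4 * Res H ^ 16"
proof -
  assume "normal_pair d H"
  then obtain P Q where H: "H = (P, T2 * Q)" and hom: "is_hom d P" "is_hom d (T2 * Q)"
    and P_1_0: "eval2 P 1 0 \<noteq> 0"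
    unfolding normal_pair_def by blast
  have "(eval2 Q 1 1 - eval2 P 1 1) ^ 4 = (eval2 P 1 1 - eval2 Q 1 1) ^ 4"
    by (simp add: power4_eq_xxxx algebra_simps)
  then show ?thesis
    unfolding F_step_def H pair_div_Fmap_T2 Res_step[OF hom P_1_0] res_ratio_def fst_conv snd_conv
    using P_1_0 by (simp add: eval2_simps power_divide power_mult_distrib flip: power_mult)
qed

lemma normal_pair_F_step_iterate: "normal_pair d H \<Longrightarrow> normal_pair (4 ^ m * d) ((F_step ^^ m) H)"
  by (induction m) (auto dest: normal_pair_F_step simp: mult.assoc)

lemma res_ratio_F_step_iterate:
  assumes "normal_pair d H"
  shows "res_ratio ((F_step ^^ m) H) = res_ratio H ^ 4 ^ m"
proof (induction m)
  case (Suc m)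
  obtain P Q where "(F_step ^^ m) H = (P, T2 * Q)"
    using normal_pair_F_step_iterate[OF assms, of m] unfolding normal_pair_def by blast
  then show ?case
    using res_ratio_F_step[of P Q] Suc by (simp add: power_mult[symmetric] mult.commute)
qed simp

fun iter_exponent :: "nat \<Rightarrow> nat" where
  "iter_exponent 0 = 0"
| "iter_exponent (Suc m) = 16 * iter_exponent m + 4 ^ Suc m"

lemma iter_exponent_eq: "iter_exponent m = (4 ^ (2 * m) - 4 ^ m) div 3"
proof -
  have "(4::nat) ^ (2 * m) = 3 * iter_exponent m + 4 ^ m"
    by (induction m) (simp_all add: power_add)
  then show ?thesis
    by simp
qed

lemma Res_F_step_iterate:
  assumes "normal_pair d H"
  shows "Res ((F_step ^^ m) H) = 4 ^ (iter_exponent m * d) * res_ratio H ^ iter_exponent m * Res H ^ 16 ^ m"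
proof (induction m)
  case (Suc m)
  have "Res ((F_step ^^ Suc m) H) = 4 ^ (4 * (4 ^ m * d)) * (res_ratio H ^ 4 ^ m) ^ 4 *
      (4 ^ (iter_exponent m * d) * res_ratio H ^ iter_exponent m * Res H ^ 16 ^ m) ^ 16"
    using Res_F_step[OF normal_pair_F_step_iterate[OF assms]] res_ratio_F_step_iterate[OF assms] Suc
    by simp
  also have "\<dots> = 4 ^ (4 * (4 ^ m * d) + 16 * (iter_exponent m * d)) *
      res_ratio H ^ (4 ^ m * 4 + iter_exponent m * 16) * Res H ^ (16 ^ m * 16)"
    by (simp add: power_add power_mult_distrib mult_ac flip: power_mult)
  also have "\<dots> = 4 ^ (iter_exponent (Suc m) * d) * res_ratio H ^ iter_exponent (Suc m) * Res H ^ 16 ^ Suc m"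
    by (simp add: algebra_simps)
  finally show ?case .
qed simp

section \<open>The reduced image of a lift\<close>

lemma T1_mult_square_neq_T2_mult_square:
  assumes "coprime z w"
  shows "T1 * w^2 \<noteq> T2 * z^2"
proof
  assume eq: "T1 * w^2 = T2 * z^2"
  show False
  proof (cases "w = 0 \<or> z = 0")
    case True
    then show False
      using eq assms by (auto simp: T1_def)
  next
    case False
    then have "degree (T1 * w^2) = 1 + 2 * degree w" and "degree (T2 * z^2) = 2 * degree z"
      by (simp_all add: degree_mult_eq degree_power_eq T1_def T2_def)
    then have "1 + 2 * degree w = 2 * degree z"
      using eq by simp
    then show False
      by presburger
  qed
qed

lemma is_hom_Fmap:
  assumes "is_hom e z" and "is_hom e w"
  shows "is_hom (4 * e + 2) (fst (Fmap (z, w)))" and "is_hom (4 * e + 2) (snd (Fmap (z, w)))"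
proof -
  have "is_hom (1 + 2 * e) (T1 * w^2)" and "is_hom (1 + 2 * e) (T2 * z^2)"
    using is_hom_mult[OF is_hom_T1 is_hom_power[OF assms(2)]]
      is_hom_mult[OF is_hom_T2 is_hom_power[OF assms(1)]] by simp_all
  then have "is_hom (2 * (1 + 2 * e)) ((T1 * w^2 - T2 * z^2)^2)"
    by (intro is_hom_power is_hom_diff)
  then show "is_hom (4 * e + 2) (fst (Fmap (z, w)))"
    by (simp add: Fmap_def algebra_simps)
  have "is_hom (e + 1) (T1 * w - T2 * z)"
    using is_hom_mult[OF is_hom_T1 assms(2)] is_hom_mult[OF is_hom_T2 assms(1)] by (simp add: is_hom_diff)
  then have "is_hom (0 + 1 + e + e + e + (e + 1)) (4 * T2 * z * w * (w - z) * (T1 * w - T2 * z))"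
    using is_hom_mult[OF is_hom_mult[OF is_hom_mult[OF is_hom_mult[OF is_hom_mult[OF
        is_hom_numeral is_hom_T2] assms(1)] assms(2)] is_hom_diff[OF assms(2,1)]]] by blast
  moreover have "0 + 1 + e + e + e + (e + 1) = 4 * e + 2"
    by simp
  ultimately show "is_hom (4 * e + 2) (snd (Fmap (z, w)))"
    unfolding Fmap_def Let_def snd_conv fst_conv by metis
qed

lemma is_hom_div_common_factor:
  assumes "is_hom n A" and "is_hom n B" and "A \<noteq> 0" and "g dvd A" and "g dvd B"
  obtains k where "is_hom k (A div g)" and "is_hom k (B div g)"
proof -
  have g0: "g \<noteq> 0"
    using assms by auto
  obtain a where a: "is_hom a g" "is_hom (n - a) (A div g)"
    using is_hom_factor[of n g "A div g"] assms by auto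
  have "is_hom (n - a) (B div g)"
  proof (cases "B = 0")
    case False
    then obtain b where "is_hom b g" "is_hom (n - b) (B div g)"
      using is_hom_factor[of n g "B div g"] assms by auto
    then show ?thesis
      using is_hom_unique[OF _ a(1) g0] by metis
  qed (simp add: is_hom_0)
  then show ?thesis
    using a that by blast
qed

lemma prime_elem_dvd_div_gcd:
  fixes p :: "'a::factorial_ring_gcd"
  assumes p: "prime_elem p" and K: "\<not> p dvd K" and A: "A = p ^ j * K" and B: "p ^ Suc j dvd B"
  shows "\<not> p dvd A div gcd A B" and "p dvd B div gcd A B"
proof -
  have p0: "p ^ j \<noteq> 0"
    using p by (simp add: prime_elem_def)
  have "p ^ j dvd p ^ Suc j"
    by (rule le_imp_power_dvd) simp
  then have "p ^ j dvd B"
    using B by (rule dvd_trans)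
  moreover have "p ^ j dvd A"
    using A by simp
  ultimately obtain h where h: "gcd A B = p ^ j * h"
    by (metis dvdE gcd_greatest)
  have "p ^ j * (h * (A div gcd A B)) = p ^ j * K"
    using A h by (metis dvd_mult_div_cancel gcd_dvd1 mult.assoc)
  then have K_eq: "K = h * (A div gcd A B)"
    using p0 by (metis mult_left_cancel)
  then show "\<not> p dvd A div gcd A B"
    using K by auto
  have "p ^ j * h * (B div gcd A B) = B"
    using h by (metis dvd_mult_div_cancel gcd_dvd2)
  then have "p ^ j * p dvd p ^ j * (h * (B div gcd A B))"
    using B by (simp add: mult.assoc mult.commute[of "p ^ j" p])
  then have "p dvd h * (B div gcd A B)"
    using dvd_times_left_cancel_iff[OF p0] by blast
  moreover have "\<not> p dvd h"
    using K K_eq by auto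
  ultimately show "p dvd B div gcd A B"
    using p by (simp add: prime_elem_dvd_mult_iff)
qed

lemma Fmap_T2_multiplicity:
  assumes "coprime z w"
  obtains j K where "\<not> T2 dvd K" and "fst (Fmap (z, w)) = T2 ^ j * K"
    and "T2 ^ Suc j dvd snd (Fmap (z, w))"
proof (cases "T2 dvd w")
  case False
  have "\<not> T2 dvd T1"
    by (simp add: T2_dvd_iff T1_def)
  then have "\<not> T2 dvd T1 * w^2"
    using False prime_elem_T2 by (simp add: prime_elem_dvd_mult_iff prime_elem_dvd_power_iff)
  have "\<not> T2 dvd T1 * w^2 - T2 * z^2"
  proof
    assume "T2 dvd T1 * w^2 - T2 * z^2"
    then have "T2 dvd (T1 * w^2 - T2 * z^2) + T2 * z^2"
      by (intro dvd_add) simp_all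
    with \<open>\<not> T2 dvd T1 * w^2\<close> show False
      by simp
  qed
  then have "\<not> T2 dvd fst (Fmap (z, w))"
    using prime_elem_T2 by (simp add: Fmap_def prime_elem_dvd_power_iff)
  moreover have "T2 dvd snd (Fmap (z, w))"
    by (simp add: Fmap_def)
  ultimately show ?thesis
    using that[of "fst (Fmap (z, w))" 0] by simp
next
  case True
  then obtain w' where w': "w = T2 * w'"
    by (rule dvdE)
  have "\<not> T2 dvd z"
    using coprime_common_divisor[OF assms _ True] prime_elem_not_unit[OF prime_elem_T2] by blast
  then have "\<not> T2 dvd z^2"
    using prime_elem_T2 by (simp add: prime_elem_dvd_power_iff)
  have "\<not> T2 dvd T1 * T2 * w'^2 - z^2"
  proof
    assume "T2 dvd T1 * T2 * w'^2 - z^2"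
    with dvd_mult2[OF dvd_triv_right] have "T2 dvd T1 * T2 * w'^2 - (T1 * T2 * w'^2 - z^2)"
      by (rule dvd_diff)
    with \<open>\<not> T2 dvd z^2\<close> show False
      by simp
  qed
  then have "\<not> T2 dvd (T1 * T2 * w'^2 - z^2)^2"
    using prime_elem_T2 by (simp add: prime_elem_dvd_power_iff)
  moreover have "fst (Fmap (z, w)) = T2^2 * (T1 * T2 * w'^2 - z^2)^2"
    unfolding Fmap_def w' by (simp add: algebra_simps power2_eq_square)
  moreover have "snd (Fmap (z, w)) = T2^3 * (4 * z * w' * (T2 * w' - z) * (T1 * w' - z))"
    unfolding Fmap_def w' by (simp add: algebra_simps power3_eq_cube)
  ultimately show ?thesis
    using that[of "(T1 * T2 * w'^2 - z^2)^2" 2] by (simp add: numeral_3_eq_3)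
qed

lemma T2_dvd_reduced_Fmap:
  assumes "coprime z w"
  shows "\<not> T2 dvd fst (pair_div (Fmap (z, w)) (pair_gcd (Fmap (z, w))))"
    and "T2 dvd snd (pair_div (Fmap (z, w)) (pair_gcd (Fmap (z, w))))"
proof -
  obtain j K where "\<not> T2 dvd K" and "fst (Fmap (z, w)) = T2 ^ j * K"
    and "T2 ^ Suc j dvd snd (Fmap (z, w))"
    using Fmap_T2_multiplicity[OF assms] .
  note reduced = prime_elem_dvd_div_gcd[OF prime_elem_T2 this]
  show "\<not> T2 dvd fst (pair_div (Fmap (z, w)) (pair_gcd (Fmap (z, w))))"
    using reduced(1) by (simp add: pair_div_def pair_gcd_def)
  show "T2 dvd snd (pair_div (Fmap (z, w)) (pair_gcd (Fmap (z, w))))"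
    using reduced(2) by (simp add: pair_div_def pair_gcd_def)
qed

lemma normal_pair_reduced_Fmap:
  assumes "coprime z w" and "is_hom e z" and "is_hom e w"
  obtains k where "normal_pair k (pair_div (Fmap (z, w)) (pair_gcd (Fmap (z, w))))"
proof -
  define P1 where "P1 = fst (pair_div (Fmap (z, w)) (pair_gcd (Fmap (z, w))))"
  define Q1 where "Q1 = snd (pair_div (Fmap (z, w)) (pair_gcd (Fmap (z, w))))"
  have "fst (Fmap (z, w)) \<noteq> 0"
    using T1_mult_square_neq_T2_mult_square[OF assms(1)] by (simp add: Fmap_def)
  then obtain k where hom_P1: "is_hom k P1" and "is_hom k Q1"
    using is_hom_div_common_factor[OF is_hom_Fmap[OF assms(2,3)]]
    unfolding P1_def Q1_def pair_div_def pair_gcd_def by auto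
  moreover obtain Q where "Q1 = T2 * Q"
    using T2_dvd_reduced_Fmap(2)[OF assms(1)] unfolding Q1_def by (rule dvdE)
  moreover have "eval2 P1 1 0 \<noteq> 0"
    using T2_dvd_reduced_Fmap(1)[OF assms(1)] T2_dvd_iff_eval2[OF hom_P1] by (simp add: P1_def)
  ultimately have "normal_pair k (P1, Q1)"
    unfolding normal_pair_def by blast
  then show ?thesis
    using that by (simp add: P1_def Q1_def)
qed

theorem proposition3p2:
  shows
  "(\<forall>(d::nat) (P::bpoly) (Q::bpoly).
      is_hom d P \<and> is_hom d (T2 * Q) \<and> eval2 P 1 0 \<noteq> 0 \<longrightarrow>
      Res (pair_div (Fmap (P, T2 * Q)) (T2^2)) =
        4 ^ (4 * d) * (eval2 Q 1 1 - eval2 P 1 1) ^ 4 * eval2 P 0 1 ^ 4 / eval2 P 1 0 ^ 8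
        * Res (P, T2 * Q) ^ 16)
   \<and>
   (\<forall>(c::complex poly fract) (C::bpoly \<times> bpoly) F1 P1 Q1 d.
      c \<notin> {0, 1, Fract [:0, 1:] 1} \<and> is_hom_lift c C \<and>
      F1 = pair_div (Fmap C) (pair_gcd (Fmap C)) \<and> F1 = (P1, Q1) \<and> d = hdeg F1 \<longrightarrow>
      (\<forall>n\<ge>1. let Fn = ((\<lambda>H. pair_div (Fmap H) (T2^2)) ^^ (n - 1)) F1;
                  A = (4 ^ (2 * (n - 1)) - 4 ^ (n - 1)) div 3 in
         Res Fn = 4 ^ (A * d)
           * ((eval2 P1 1 1 - eval2 Q1 1 1) * eval2 P1 0 1 / eval2 P1 1 0 ^ 2) ^ A
           * Res F1 ^ (4 ^ (2 * (n - 1)))))"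
proof (intro conjI allI impI)
  fix d P Q
  assume "is_hom d P \<and> is_hom d (T2 * Q) \<and> eval2 P 1 0 \<noteq> 0"
  then have "is_hom d P" "is_hom d (T2 * Q)" "eval2 P 1 0 \<noteq> 0"
    by auto
  then show "Res (pair_div (Fmap (P, T2 * Q)) (T2^2)) =
      4 ^ (4 * d) * (eval2 Q 1 1 - eval2 P 1 1) ^ 4 * eval2 P 0 1 ^ 4 / eval2 P 1 0 ^ 8
      * Res (P, T2 * Q) ^ 16"
    unfolding pair_div_Fmap_T2 by (rule Res_step)
next
  fix c C F1 P1 Q1 d and n :: nat
  assume "c \<notin> {0, 1, Fract [:0, 1:] 1} \<and> is_hom_lift c C \<and>
      F1 = pair_div (Fmap C) (pair_gcd (Fmap C)) \<and> F1 = (P1, Q1) \<and> d = hdeg F1"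
  then have lift: "is_hom_lift c C" and F1: "F1 = pair_div (Fmap C) (pair_gcd (Fmap C))"
    and P1_Q1: "F1 = (P1, Q1)" and d: "d = hdeg F1"
    by auto
  obtain e where "coprime (fst C) (snd C)" "is_hom e (fst C)" "is_hom e (snd C)"
    using lift unfolding is_hom_lift_def by auto
  then obtain k where "normal_pair k F1"
    using normal_pair_reduced_Fmap[of "fst C" "snd C"] unfolding F1 by auto
  then have normal: "normal_pair d F1"
    using hdeg_normal_pair d by auto
  have "(\<lambda>H. pair_div (Fmap H) (T2^2)) = F_step"
    by (simp add: fun_eq_iff F_step_def)
  then show "let Fn = ((\<lambda>H. pair_div (Fmap H) (T2^2)) ^^ (n - 1)) F1;
                  A = (4 ^ (2 * (n - 1)) - 4 ^ (n - 1)) div 3 in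
         Res Fn = 4 ^ (A * d)
           * ((eval2 P1 1 1 - eval2 Q1 1 1) * eval2 P1 0 1 / eval2 P1 1 0 ^ 2) ^ A
           * Res F1 ^ (4 ^ (2 * (n - 1)))"
    using Res_F_step_iterate[OF normal, of "n - 1"]
    by (simp add: Let_def iter_exponent_eq res_ratio_def P1_Q1 power_mult)
qed

end
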